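(* Let $G=A\oplus B$ be an abelian group with $\mathrm{Hom}(B,A)=\{0\}$. Then $G$ is uniformly strongly co-Hopfian if and only if both $A$ and $B$ are uniformly strongly co-Hopfian. Moreover, if $m$ is an Sco-H bound for $A$ and $n$ is an Sco-H bound for $B$, then $m+n$ is an Sco-H bound for $G$.
   Context: All groups are abelian. A group $G$ is uniformly strongly co-Hopfian if there is a fixed $m\in\mathbb N$ such that $\phi^m(G)=\phi^{m+1}(G)$ for every endomorphism $\phi$ of $G$; such an $m$ is called an Sco-H bound for $G$. *)

theory Defs
  imports Main "HOL-Library.Product_Plus"
begin

definition is_hom :: "('a::ab_group_add \<Rightarrow> 'b::ab_group_add) \<Rightarrow> bool" where
  "is_hom f \<longleftrightarrow> (\<forall>x y. f (x + y) = f x + f y)"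

definition ScoH_bound :: "'a::ab_group_add itself \<Rightarrow> nat \<Rightarrow> bool" where
  "ScoH_bound _ m \<longleftrightarrow>
     (\<forall>\<phi>::'a \<Rightarrow> 'a. is_hom \<phi> \<longrightarrow> range (\<phi> ^^ m) = range (\<phi> ^^ Suc m))"

definition unif_strongly_coHopfian :: "'a::ab_group_add itself \<Rightarrow> bool" where
  "unif_strongly_coHopfian T \<longleftrightarrow> (\<exists>m. ScoH_bound T m)"

end

theory Submission
  imports Defs
begin

text \<open>Since \<open>Hom(B, A) = 0\<close>, every endomorphism \<open>\<phi>\<close> of \<open>A \<oplus> B\<close> is triangular: it maps
  \<open>B\<close> into itself via some \<open>\<delta>\<close> and induces an endomorphism \<open>\<alpha>\<close> on \<open>A \<cong> G/B\<close>. Given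
  \<open>\<phi>\<^sup>m\<^sup>+\<^sup>n(g)\<close>, choose \<open>a\<close> with \<open>\<alpha>\<^sup>m(g\<^sub>A) = \<alpha>\<^sup>m\<^sup>+\<^sup>1(a)\<close>; then \<open>\<phi>\<^sup>m(g) - \<phi>\<^sup>m\<^sup>+\<^sup>1(a)\<close> lies in \<open>B\<close>,
  and applying \<open>\<phi>\<^sup>n\<close> moves it into \<open>\<delta>\<^sup>n(B) = \<delta>\<^sup>m\<^sup>+\<^sup>n\<^sup>+\<^sup>1(B)\<close>, so \<open>\<phi>\<^sup>m\<^sup>+\<^sup>n(g) \<in> \<phi>\<^sup>m\<^sup>+\<^sup>n\<^sup>+\<^sup>1(G)\<close>.
  Conversely, a bound for \<open>A \<oplus> B\<close> is one for each summand, by testing it on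
  \<open>\<alpha> \<oplus> id\<close> and \<open>id \<oplus> \<beta>\<close>.\<close>

lemma is_hom_comp: "is_hom f \<Longrightarrow> is_hom g \<Longrightarrow> is_hom (f \<circ> g)"
  by (simp add: is_hom_def)

lemma is_hom_funpow:
  fixes f :: "'a::ab_group_add \<Rightarrow> 'a"
  shows "is_hom f \<Longrightarrow> is_hom (f ^^ k)"
  by (induction k) (auto simp: is_hom_def)

lemma is_hom_map_prod: "is_hom f \<Longrightarrow> is_hom g \<Longrightarrow> is_hom (map_prod f g)"
  by (simp add: is_hom_def)

lemma is_hom_id: "is_hom id"
  by (simp add: is_hom_def)

lemma is_hom_fst: "is_hom fst"
  by (simp add: is_hom_def)

lemma is_hom_snd: "is_hom snd"
  by (simp add: is_hom_def)

lemma is_hom_Pair_left: "is_hom (\<lambda>a. (a, 0))"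
  by (simp add: is_hom_def)

lemma is_hom_Pair_right: "is_hom (\<lambda>b. (0, b))"
  by (simp add: is_hom_def)

lemma funpow_map_prod:
  fixes f :: "'a \<Rightarrow> 'a" and g :: "'b \<Rightarrow> 'b"
  shows "map_prod f g ^^ k = map_prod (f ^^ k) (g ^^ k)"
  by (induction k) (auto simp: fun_eq_iff)

lemma range_map_prod: "range (map_prod f g) = range f \<times> range g"
  by (metis UNIV_Times_UNIV map_prod_surj_on)

lemma range_funpow_Suc_subset:
  fixes f :: "'a \<Rightarrow> 'a"
  shows "range (f ^^ Suc k) \<subseteq> range (f ^^ k)"
  unfolding funpow_Suc_right by auto

lemma range_funpow_stable:
  fixes f :: "'a \<Rightarrow> 'a"
  assumes "range (f ^^ n) = range (f ^^ Suc n)"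
  shows "range (f ^^ (j + n)) = range (f ^^ n)"
proof (induction j)
  case (Suc j)
  have "range (f ^^ (Suc j + n)) = (f ^^ j) ` range (f ^^ Suc n)"
    by (simp only: add_Suc_shift funpow_add image_comp range_composition)
  also have "\<dots> = range (f ^^ (j + n))"
    by (simp only: assms[symmetric] funpow_add image_comp range_composition)
  finally show ?case using Suc by simp
qed simp

lemma ScoH_boundI:
  assumes "\<And>\<phi>::'a::ab_group_add \<Rightarrow> 'a. is_hom \<phi> \<Longrightarrow> range (\<phi> ^^ m) \<subseteq> range (\<phi> ^^ Suc m)"
  shows "ScoH_bound TYPE('a) m"
  unfolding ScoH_bound_def
  using assms range_funpow_Suc_subset by (intro allI impI subset_antisym)

lemma ScoH_boundD:
  fixes \<phi> :: "'a::ab_group_add \<Rightarrow> 'a"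
  shows "ScoH_bound TYPE('a) m \<Longrightarrow> is_hom \<phi> \<Longrightarrow> range (\<phi> ^^ m) = range (\<phi> ^^ Suc m)"
  by (simp add: ScoH_bound_def)

lemma ScoH_bound_fst:
  assumes "ScoH_bound TYPE('a::ab_group_add \<times> 'b::ab_group_add) k"
  shows "ScoH_bound TYPE('a) k"
  unfolding ScoH_bound_def
proof (intro allI impI)
  fix \<alpha> :: "'a \<Rightarrow> 'a"
  assume "is_hom \<alpha>"
  then have "is_hom (map_prod \<alpha> (id :: 'b \<Rightarrow> 'b))"
    by (simp add: is_hom_map_prod is_hom_id)
  then have "range (map_prod \<alpha> id ^^ k) = range (map_prod \<alpha> (id :: 'b \<Rightarrow> 'b) ^^ Suc k)"
    by (rule ScoH_boundD[OF assms])
  then have "range (\<alpha> ^^ k) \<times> (UNIV :: 'b set) = range (\<alpha> ^^ Suc k) \<times> UNIV"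
    by (simp only: funpow_map_prod range_map_prod id_funpow surj_id)
  then show "range (\<alpha> ^^ k) = range (\<alpha> ^^ Suc k)"
    by (simp add: times_eq_iff)
qed

lemma ScoH_bound_snd:
  assumes "ScoH_bound TYPE('a::ab_group_add \<times> 'b::ab_group_add) k"
  shows "ScoH_bound TYPE('b) k"
  unfolding ScoH_bound_def
proof (intro allI impI)
  fix \<beta> :: "'b \<Rightarrow> 'b"
  assume "is_hom \<beta>"
  then have "is_hom (map_prod (id :: 'a \<Rightarrow> 'a) \<beta>)"
    by (simp add: is_hom_map_prod is_hom_id)
  then have "range (map_prod id \<beta> ^^ k) = range (map_prod (id :: 'a \<Rightarrow> 'a) \<beta> ^^ Suc k)"
    by (rule ScoH_boundD[OF assms])
  then have "(UNIV :: 'a set) \<times> range (\<beta> ^^ k) = UNIV \<times> range (\<beta> ^^ Suc k)"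
    by (simp only: funpow_map_prod range_map_prod id_funpow surj_id)
  then show "range (\<beta> ^^ k) = range (\<beta> ^^ Suc k)"
    by (simp add: times_eq_iff)
qed

lemma triangular_range_funpow_subset:
  fixes \<phi> :: "'a::ab_group_add \<times> 'b::ab_group_add \<Rightarrow> 'a \<times> 'b"
  assumes hom: "is_hom \<phi>"
    and fst_\<phi>: "\<And>p. fst (\<phi> p) = \<alpha> (fst p)"
    and \<phi>_right: "\<And>c. \<phi> (0, c) = (0, \<delta> c)"
    and \<alpha>_stable: "range (\<alpha> ^^ m) = range (\<alpha> ^^ Suc m)"
    and \<delta>_stable: "range (\<delta> ^^ n) = range (\<delta> ^^ Suc n)"
  shows "range (\<phi> ^^ (m + n)) \<subseteq> range (\<phi> ^^ Suc (m + n))"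
proof (rule image_subsetI)
  fix g :: "'a \<times> 'b"
  have fst_funpow: "fst ((\<phi> ^^ k) p) = (\<alpha> ^^ k) (fst p)" for k p
    by (induction k) (simp_all add: fst_\<phi>)
  have funpow_right: "(\<phi> ^^ k) (0, c) = (0, (\<delta> ^^ k) c)" for k c
    by (induction k) (simp_all add: \<phi>_right)
  have funpow_add_hom: "(\<phi> ^^ k) (x + y) = (\<phi> ^^ k) x + (\<phi> ^^ k) y" for k x y
    using is_hom_funpow[OF hom] unfolding is_hom_def by blast
  obtain a where a: "(\<alpha> ^^ m) (fst g) = (\<alpha> ^^ Suc m) a"
    using \<alpha>_stable by (metis rangeE rangeI)
  define c where "c = snd ((\<phi> ^^ m) g - (\<phi> ^^ Suc m) (a, 0))"
  have split: "(\<phi> ^^ m) g = (\<phi> ^^ Suc m) (a, 0) + (0, c)"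
    by (simp add: prod_eq_iff c_def fst_funpow fst_\<phi> a)
  obtain c' where c': "(\<delta> ^^ n) c = (\<delta> ^^ (Suc m + n)) c'"
    using range_funpow_stable[OF \<delta>_stable, of "Suc m"] by (metis rangeE rangeI)
  have shift: "(\<phi> ^^ n) ((\<phi> ^^ k) z) = (\<phi> ^^ (k + n)) z" for k z
    by (simp only: add.commute[of k n] funpow_add comp_apply)
  have "(\<phi> ^^ (m + n)) g = (\<phi> ^^ n) ((\<phi> ^^ m) g)"
    by (simp only: shift)
  also have "\<dots> = (\<phi> ^^ (Suc m + n)) (a, 0) + (\<phi> ^^ n) (0, c)"
    by (simp only: split funpow_add_hom shift)
  also have "(\<phi> ^^ n) (0, c) = (\<phi> ^^ (Suc m + n)) (0, c')"
    by (simp only: funpow_right c')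
  finally have "(\<phi> ^^ (m + n)) g = (\<phi> ^^ (Suc m + n)) ((a, 0) + (0, c'))"
    by (simp only: funpow_add_hom)
  then show "(\<phi> ^^ (m + n)) g \<in> range (\<phi> ^^ Suc (m + n))"
    by (metis add_Suc rangeI)
qed

lemma ScoH_bound_prod:
  assumes no_hom: "\<forall>h :: 'b::ab_group_add \<Rightarrow> 'a::ab_group_add. is_hom h \<longrightarrow> h = (\<lambda>_. 0)"
    and A_bound: "ScoH_bound TYPE('a) m" and B_bound: "ScoH_bound TYPE('b) n"
  shows "ScoH_bound TYPE('a \<times> 'b) (m + n)"
proof (rule ScoH_boundI)
  fix \<phi> :: "'a \<times> 'b \<Rightarrow> 'a \<times> 'b"
  assume hom: "is_hom \<phi>"
  define \<alpha> where "\<alpha> = fst \<circ> \<phi> \<circ> (\<lambda>a. (a, 0))"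
  define \<delta> where "\<delta> = snd \<circ> \<phi> \<circ> (\<lambda>b. (0, b))"
  have "is_hom (fst \<circ> \<phi> \<circ> (\<lambda>b. (0, b)))"
    by (intro is_hom_comp is_hom_fst hom is_hom_Pair_right)
  then have "fst \<circ> \<phi> \<circ> (\<lambda>b. (0, b)) = (\<lambda>_. 0)"
    using no_hom by blast
  then have \<phi>_right: "\<phi> (0, c) = (0, \<delta> c)" for c
    by (simp add: \<delta>_def prod_eq_iff fun_eq_iff)
  have fst_\<phi>: "fst (\<phi> p) = \<alpha> (fst p)" for p
  proof -
    have "\<phi> p = \<phi> (fst p, 0) + \<phi> (0, snd p)"
      using hom unfolding is_hom_def by (metis add_Pair add.right_neutral add_0 prod.collapse)
    then show ?thesis
      by (simp add: \<alpha>_def \<phi>_right)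
  qed
  have \<alpha>_hom: "is_hom \<alpha>" and \<delta>_hom: "is_hom \<delta>"
    unfolding \<alpha>_def \<delta>_def
    by (intro is_hom_comp is_hom_fst is_hom_snd hom is_hom_Pair_left is_hom_Pair_right)+
  show "range (\<phi> ^^ (m + n)) \<subseteq> range (\<phi> ^^ Suc (m + n))"
    by (rule triangular_range_funpow_subset[OF hom fst_\<phi> \<phi>_right
          ScoH_boundD[OF A_bound \<alpha>_hom] ScoH_boundD[OF B_bound \<delta>_hom]])
qed

theorem mainTheorem9:
  assumes "\<forall>h :: 'b::ab_group_add \<Rightarrow> 'a::ab_group_add. is_hom h \<longrightarrow> h = (\<lambda>_. 0)"
  shows "(unif_strongly_coHopfian TYPE('a \<times> 'b) \<longleftrightarrow>
            unif_strongly_coHopfian TYPE('a) \<and> unif_strongly_coHopfian TYPE('b))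
         \<and> (\<forall>m n. ScoH_bound TYPE('a) m \<and> ScoH_bound TYPE('b) n
                   \<longrightarrow> ScoH_bound TYPE('a \<times> 'b) (m + n))"
  using ScoH_bound_fst ScoH_bound_snd ScoH_bound_prod[OF assms]
  unfolding unif_strongly_coHopfian_def by blast

end
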